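(* Let $\mathcal N=\{N_1,\ldots,N_\ell\}$ ($\ell\ge4$) be a family of $k$-sets satisfying properties (i) and (ii) below, $m=|V|-k$, and fix any run of the decomposition process described in the context. Then the number of indices $x\in\{1,\dots,\ell\}$ with $0<|\Gamma_x|<m^{1/3}$ (light $k$-sets) is at most $3m$.
   Context: Setting: $k\ge3$, $\mathcal N=\{N_1,\dots,N_\ell\}$ a family of $k$-subsets, $V=\bigcup N_i$, $n=|V|$, $m=n-k$, satisfying (i) $\bigcap_{i}N_i=\varnothing$ but $\bigcap_{j\ne i}N_j\ne\varnothing$ for all $i$; (ii) every $S\subseteq V$ with $|S|\ge k+1$ contains a $3$-set $T$ not contained in any $N_i$. Assume $\ell\ge4$. Decomposition process: Stage $0$: $\ell_0=\ell$; for each $i\le\ell_0$ choose $a_i^{(0)}\in\bigcap_{r\ne i}N_r$; kernel $A^{(0)}=\{a_1^{(0)},\dots,a_{\ell_0}^{(0)}\}$. Having defined stages $0,\dots,j$ (with surviving sets $N_1,\dots,N_{\ell_j}$, $\ell_j\ge4$, and kernels $A^{(0)},\dots,A^{(j)}$), consider $R^{(j)}=\{N_r\setminus\bigcup_{s\le j}A^{(s)} : r\le\ell_j\}$, which has empty intersection. If every subfamily of $R^{(j)}$ minimal with respect to having empty intersection has only $2$ or $3$ members, stop and set $t=j$. Otherwise choose such a minimal subfamily with at least $4$ members; after reindexing assume it consists of the truncations $N_r\setminus\bigcup_{s\le j}A^{(s)}$, $r\le\ell_{j+1}$; choose $a_i^{(j+1)}\in\bigcap_{r\le\ell_{j+1},r\ne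 i}\bigl(N_r\setminus\bigcup_{s\le j}A^{(s)}\bigr)$ for $i\le\ell_{j+1}$, and let $A^{(j+1)}$ be the set of these. Let $A=\bigcup_{s\le t}A^{(s)}$ and $G=V\setminus A$. For each $i$ let $t_i=\max\{j: i\le\ell_j\}$. For $g\in G$, $t_g=\max\{t_i: g\in N_i\}$ and $I_g=\{i: g\in N_i,\ t_i=t_g\}$. For $x\in\{1,\dots,\ell\}$, $\Gamma_x=\{g\in G: I_g=\{x\}\}$. *)

theory Defs
  imports Complex_Main
begin

(* Indices of the family are 1..l; N i is the i-th k-set. *)

definition prop_i :: "nat \<Rightarrow> (nat \<Rightarrow> 'a set) \<Rightarrow> bool" where
  "prop_i l N \<longleftrightarrow> (\<Inter>i\<in>{1..l}. N i) = {} \<and>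
     (\<forall>i\<in>{1..l}. (\<Inter>j\<in>{1..l} - {i}. N j) \<noteq> {})"

definition prop_ii :: "nat \<Rightarrow> nat \<Rightarrow> (nat \<Rightarrow> 'a set) \<Rightarrow> bool" where
  "prop_ii k l N \<longleftrightarrow> (\<forall>S \<subseteq> (\<Union>i\<in>{1..l}. N i). card S \<ge> k + 1 \<longrightarrow>
     (\<exists>T \<subseteq> S. card T = 3 \<and> (\<forall>i\<in>{1..l}. \<not> T \<subseteq> N i)))"

definition minimal_empty :: "(nat \<Rightarrow> 'a set) \<Rightarrow> nat set \<Rightarrow> bool" where
  "minimal_empty F J \<longleftrightarrow> J \<noteq> {} \<and> (\<Inter>r\<in>J. F r) = {} \<and>
     (\<forall>J'. J' \<subset> J \<longrightarrow> (\<Inter>r\<in>J'. F r) \<noteq> {})"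

(* union of kernels A^(0), ..., A^(j);  a s i = a_i^(s), S s = surviving indices at stage s *)
definition kernels_upto :: "(nat \<Rightarrow> nat \<Rightarrow> 'a) \<Rightarrow> (nat \<Rightarrow> nat set) \<Rightarrow> nat \<Rightarrow> 'a set" where
  "kernels_upto a S j = (\<Union>s\<in>{..j}. a s ` S s)"

definition decomposition_run ::
  "nat \<Rightarrow> (nat \<Rightarrow> 'a set) \<Rightarrow> nat \<Rightarrow> (nat \<Rightarrow> nat set) \<Rightarrow> (nat \<Rightarrow> nat \<Rightarrow> 'a) \<Rightarrow> bool" where
  "decomposition_run l N t S a \<longleftrightarrow>
     S 0 = {1..l} \<and>
     (\<forall>i\<in>S 0. a 0 i \<in> (\<Inter>r\<in>S 0 - {i}. N r)) \<and>
     (\<forall>j<t. S (Suc j) \<subseteq> S j \<and> card (S (Suc j)) \<ge> 4 \<and>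
        minimal_empty (\<lambda>r. N r - kernels_upto a S j) (S (Suc j)) \<and>
        (\<forall>i\<in>S (Suc j). a (Suc j) i \<in> (\<Inter>r\<in>S (Suc j) - {i}. N r - kernels_upto a S j))) \<and>
     (\<forall>J \<subseteq> S t. minimal_empty (\<lambda>r. N r - kernels_upto a S t) J \<longrightarrow> card J = 2 \<or> card J = 3)"

definition stage_idx :: "(nat \<Rightarrow> nat set) \<Rightarrow> nat \<Rightarrow> nat \<Rightarrow> nat" where
  "stage_idx S t i = Max {j. j \<le> t \<and> i \<in> S j}"

definition stage_elem :: "nat \<Rightarrow> (nat \<Rightarrow> 'a set) \<Rightarrow> (nat \<Rightarrow> nat set) \<Rightarrow> nat \<Rightarrow> 'a \<Rightarrow> nat" where
  "stage_elem l N S t g = Max {stage_idx S t i | i. i \<in> {1..l} \<and> g \<in> N i}"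

definition I_set :: "nat \<Rightarrow> (nat \<Rightarrow> 'a set) \<Rightarrow> (nat \<Rightarrow> nat set) \<Rightarrow> nat \<Rightarrow> 'a \<Rightarrow> nat set" where
  "I_set l N S t g = {i \<in> {1..l}. g \<in> N i \<and> stage_idx S t i = stage_elem l N S t g}"

definition G_set :: "nat \<Rightarrow> (nat \<Rightarrow> 'a set) \<Rightarrow> nat \<Rightarrow> (nat \<Rightarrow> nat set) \<Rightarrow> (nat \<Rightarrow> nat \<Rightarrow> 'a) \<Rightarrow> 'a set" where
  "G_set l N t S a = (\<Union>i\<in>{1..l}. N i) - kernels_upto a S t"

definition Gamma :: "nat \<Rightarrow> (nat \<Rightarrow> 'a set) \<Rightarrow> nat \<Rightarrow> (nat \<Rightarrow> nat set) \<Rightarrow> (nat \<Rightarrow> nat \<Rightarrow> 'a) \<Rightarrow> nat \<Rightarrow> 'a set" where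
  "Gamma l N t S a x = {g \<in> G_set l N t S a. I_set l N S t g = {x}}"

end

theory Submission
  imports Defs
begin

(*
  Pick an index i that survives to the last stage t, so t_i = t. Every g in N_i then has
  t_g = t and i in I_g; hence the sets Gamma_x with x ~= i avoid N_i and lie in V - N_i,
  which has m elements. The Gamma_x are pairwise disjoint, since I_g = {x} determines x, so
  at most m + 1 of them are nonempty. If m = 0 no Gamma_x satisfies 0 < |Gamma_x| < m^(1/3),
  and otherwise m + 1 <= 3m.
*)

lemma card_le_card_if_disjoint_nonempty:
  assumes "finite U"
    and "\<And>x. x \<in> L \<Longrightarrow> F x \<noteq> {} \<and> F x \<subseteq> U"
    and "\<And>x y. x \<in> L \<Longrightarrow> y \<in> L \<Longrightarrow> x \<noteq> y \<Longrightarrow> F x \<inter> F y = {}"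
  shows "card L \<le> card U"
proof (cases "finite L")
  case True
  have finF: "finite (F x)" if "x \<in> L" for x
    using assms(1,2) that finite_subset by blast
  have "card L = (\<Sum>x\<in>L. 1)" by simp
  also have "\<dots> \<le> (\<Sum>x\<in>L. card (F x))"
    using assms(2) finF by (intro sum_mono) (simp add: Suc_le_eq card_gt_0_iff)
  also have "\<dots> = card (\<Union>x\<in>L. F x)"
    using True finF assms(3) by (simp add: card_UN_disjoint)
  also have "\<dots> \<le> card U"
    using assms(1,2) by (intro card_mono) auto
  finally show ?thesis .
qed simp

lemma decomposition_run_stage_subset:
  assumes "decomposition_run l N t S a" and "j \<le> t"
  shows "S j \<subseteq> {1..l}"
  using assms(2)
proof (induction j)
  case 0
  then show ?case using assms(1) unfolding decomposition_run_def by simp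
next
  case (Suc j)
  then have "S (Suc j) \<subseteq> S j" using assms(1) unfolding decomposition_run_def by auto
  then show ?case using Suc by auto
qed

lemma decomposition_run_final_nonempty:
  assumes "decomposition_run l N t S a" and "l \<ge> 1"
  shows "S t \<noteq> {}"
proof (cases t)
  case 0
  then show ?thesis using assms unfolding decomposition_run_def by auto
next
  case (Suc j)
  then have "card (S t) \<ge> 4" using assms(1) unfolding decomposition_run_def by auto
  then show ?thesis by auto
qed

lemma stage_idx_le:
  assumes "decomposition_run l N t S a" and "i \<in> {1..l}"
  shows "stage_idx S t i \<le> t"
proof -
  have "finite {j. j \<le> t \<and> i \<in> S j}" by (rule finite_subset[of _ "{..t}"]) auto
  moreover have "0 \<in> {j. j \<le> t \<and> i \<in> S j}"
    using assms unfolding decomposition_run_def by auto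
  ultimately have "stage_idx S t i \<in> {j. j \<le> t \<and> i \<in> S j}"
    unfolding stage_idx_def using Max_in by blast
  then show ?thesis by simp
qed

lemma stage_idx_final:
  assumes "i \<in> S t"
  shows "stage_idx S t i = t"
  unfolding stage_idx_def using assms by (intro Max_eqI) auto

lemma final_survivor_mem_I_set:
  assumes run: "decomposition_run l N t S a" and "i \<in> S t" and "g \<in> N i"
  shows "i \<in> I_set l N S t g"
proof -
  have il: "i \<in> {1..l}" using decomposition_run_stage_subset[OF run order_refl] assms(2) by auto
  have ti: "stage_idx S t i = t" using assms(2) by (rule stage_idx_final)
  let ?M = "{stage_idx S t i' | i'. i' \<in> {1..l} \<and> g \<in> N i'}"
  have "?M = stage_idx S t ` {i' \<in> {1..l}. g \<in> N i'}" by auto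
  then have "finite ?M" by simp
  moreover have "t \<in> ?M" using il ti assms(3) by force
  moreover have "\<forall>s\<in>?M. s \<le> t" using stage_idx_le[OF run] by auto
  ultimately have "stage_elem l N S t g = t"
    unfolding stage_elem_def by (intro Max_eqI) auto
  then show ?thesis unfolding I_set_def using il ti assms(3) by simp
qed

lemma Gamma_disjoint:
  assumes "x \<noteq> y"
  shows "Gamma l N t S a x \<inter> Gamma l N t S a y = {}"
  using assms unfolding Gamma_def by auto

lemma Gamma_subset_Diff_final_survivor:
  assumes "decomposition_run l N t S a" and "i \<in> S t" and "x \<noteq> i"
  shows "Gamma l N t S a x \<subseteq> (\<Union>j\<in>{1..l}. N j) - N i"
proof
  fix g assume g: "g \<in> Gamma l N t S a x"
  then have "I_set l N S t g = {x}" unfolding Gamma_def by simp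
  then have "g \<notin> N i" using final_survivor_mem_I_set[OF assms(1,2), of g] assms(3) by auto
  moreover have "g \<in> (\<Union>j\<in>{1..l}. N j)" using g unfolding Gamma_def G_set_def by simp
  ultimately show "g \<in> (\<Union>j\<in>{1..l}. N j) - N i" by simp
qed

lemma card_nonempty_Gamma_le:
  assumes run: "decomposition_run l N t S a" and "l \<ge> 1"
    and card_N: "\<forall>i\<in>{1..l}. finite (N i) \<and> card (N i) = k"
  shows "card {x \<in> {1..l}. Gamma l N t S a x \<noteq> {}} \<le> card (\<Union>i\<in>{1..l}. N i) - k + 1"
proof -
  let ?V = "\<Union>i\<in>{1..l}. N i"
  let ?L = "{x \<in> {1..l}. Gamma l N t S a x \<noteq> {}}"
  obtain i where i: "i \<in> S t" using decomposition_run_final_nonempty[OF assms(1,2)] by blast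
  have il: "i \<in> {1..l}" using decomposition_run_stage_subset[OF run order_refl] i by auto
  have "card (?L - {i}) \<le> card (?V - N i)"
  proof (rule card_le_card_if_disjoint_nonempty[where F = "Gamma l N t S a"])
    show "finite (?V - N i)" using card_N by auto
    show "Gamma l N t S a x \<noteq> {} \<and> Gamma l N t S a x \<subseteq> ?V - N i" if "x \<in> ?L - {i}" for x
      using that Gamma_subset_Diff_final_survivor[OF run i] by auto
  qed (rule Gamma_disjoint)
  also have "card (?V - N i) = card ?V - k"
    using card_N il by (subst card_Diff_subset) auto
  finally show ?thesis
    using card_Diff_singleton_if[of ?L i] by (cases "i \<in> ?L") auto
qed

theorem lemma15:
  fixes k l t :: nat and N :: "nat \<Rightarrow> 'a set" and S :: "nat \<Rightarrow> nat set"
    and a :: "nat \<Rightarrow> nat \<Rightarrow> 'a"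
  assumes "k \<ge> 3" and "l \<ge> 4"
    and "\<forall>i\<in>{1..l}. finite (N i) \<and> card (N i) = k"
    and "prop_i l N" and "prop_ii k l N"
    and "decomposition_run l N t S a"
  shows "card {x \<in> {1..l}. 0 < card (Gamma l N t S a x) \<and>
            real (card (Gamma l N t S a x)) < real (card (\<Union>i\<in>{1..l}. N i) - k) powr (1/3)}
         \<le> 3 * (card (\<Union>i\<in>{1..l}. N i) - k)"
    (is "card ?light \<le> 3 * ?m")
proof (cases "?m = 0")
  case True
  then have "?light = {}" by simp
  then show ?thesis by (simp only: card.empty zero_le)
next
  case False
  have "?light \<subseteq> {x \<in> {1..l}. Gamma l N t S a x \<noteq> {}}" by auto
  then have "card ?light \<le> card {x \<in> {1..l}. Gamma l N t S a x \<noteq> {}}"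
    by (intro card_mono) auto
  also have "\<dots> \<le> ?m + 1"
    using card_nonempty_Gamma_le[OF assms(6)] assms(2,3) by simp
  finally show ?thesis using False by linarith
qed

end
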